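(* Let $G$ be a compact abelian group with discrete dual group $\Gamma$, let $N \in \mathbb{N}$ and $E \subset \Gamma$. The following are equivalent: (1) $E$ is $N$-PR; (2) whenever $\gamma_1, \dots, \gamma_n \in E$ are distinct and $\prod_{i=1}^n \gamma_i^{m_i} = 1$ for some integers $m_1,\dots,m_n \in \mathbb{Z}$, then $N$ divides $m_i$ for all $i$.
   Context: Characters are written multiplicatively; $\mathbb{Z}_N$ is identified with the $N$-th roots of unity in the unit circle $\mathbb{T}$. A subset $E \subset \Gamma$ is $N$-PR if for every function $\varphi: E \to \mathbb{Z}_N$ there exists $x \in G$ with $\varphi(\gamma) = \gamma(x)$ for all $\gamma \in E$. *)

theory Defs
  imports "HOL-Analysis.Analysis"
begin

text \<open>The group G is a type of class topological_ab_group_add (written additively),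
  compact and Hausdorff.\<close>

definition character :: "('g::topological_ab_group_add \<Rightarrow> complex) \<Rightarrow> bool" where
  "character \<gamma> \<longleftrightarrow> continuous_on UNIV \<gamma> \<and> (\<forall>x. norm (\<gamma> x) = 1)
      \<and> (\<forall>x y. \<gamma> (x + y) = \<gamma> x * \<gamma> y)"

definition dual_group :: "('g::topological_ab_group_add \<Rightarrow> complex) set" where
  "dual_group = {\<gamma>. character \<gamma>}"

text \<open>Z_N identified with the N-th roots of unity.\<close>
definition roots_of_unity :: "nat \<Rightarrow> complex set" where
  "roots_of_unity N = {z. z ^ N = 1}"

definition N_PR :: "nat \<Rightarrow> ('g::topological_ab_group_add \<Rightarrow> complex) set \<Rightarrow> bool" where
  "N_PR N E \<longleftrightarrow> (\<forall>\<phi>. (\<forall>\<gamma>\<in>E. \<phi> \<gamma> \<in> roots_of_unity N) \<longrightarrow>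
      (\<exists>x. \<forall>\<gamma>\<in>E. \<phi> \<gamma> = \<gamma> x))"

end

theory Submission
  imports Defs
begin

(* For (1) \<Longrightarrow> (2), apply N-PR to the function that is a primitive N-th root of unity at one
   character and 1 elsewhere. For (2) \<Longrightarrow> (1), compactness reduces the problem to finitely many
   characters \<gamma>_1, ..., \<gamma>_n with targets t_i that are N-th roots of unity and satisfy every
   multiplicative relation among the \<gamma>_i. If no x had \<gamma>_i x = t_i for all i, compactness would
   give \<delta> > 0 with |P x| \<le> 2n - \<delta>/4 for P = \<Sum>_i (1 + \<gamma>_i conj t_i). Expanding |P|^(2M) as a
   combination of characters and averaging over suitable finite sets of points (in place of
   integrating against Haar measure), the trivial characters contribute at least
   (2n)^(2M) / (1+M)^n, because the relation hypothesis makes their coefficients 1. For large M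
   this exceeds (2n - \<delta>/4)^(2M). *)

definition unimodular_hom :: "('g::ab_group_add \<Rightarrow> complex) \<Rightarrow> bool" where
  "unimodular_hom \<kappa> \<longleftrightarrow> (\<forall>x. norm (\<kappa> x) = 1) \<and> (\<forall>x y. \<kappa> (x + y) = \<kappa> x * \<kappa> y)"

lemma character_imp_unimodular_hom: "character \<gamma> \<Longrightarrow> unimodular_hom \<gamma>"
  by (simp add: character_def unimodular_hom_def)

lemma unimodular_hom_prod_powi:
  assumes "\<And>i. i \<in> I \<Longrightarrow> unimodular_hom (\<gamma> i)"
  shows "unimodular_hom (\<lambda>x. \<Prod>i\<in>I. \<gamma> i x powi e i)"
  using assms unfolding unimodular_hom_def
  by (auto simp: prod_norm[symmetric] norm_power_int power_int_mult_distrib prod.distrib)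

lemma norm_sum_list_unimodular_hom_le:
  assumes "unimodular_hom \<psi>"
  shows "norm (sum_list (map \<psi> ys)) \<le> length ys"
proof (induction ys)
  case (Cons y ys)
  then show ?case
    using assms norm_triangle_ineq[of "\<psi> y" "sum_list (map \<psi> ys)"]
    by (simp add: unimodular_hom_def)
qed simp

fun shifted_copies :: "nat \<Rightarrow> 'g::ab_group_add \<Rightarrow> 'g list \<Rightarrow> 'g list" where
  "shifted_copies 0 x ys = []"
| "shifted_copies (Suc K) x ys = ys @ map ((+) x) (shifted_copies K x ys)"

lemma length_shifted_copies: "length (shifted_copies K x ys) = K * length ys"
  by (induction K) auto

lemma sum_list_shifted_copies:
  assumes "unimodular_hom \<psi>"
  shows "sum_list (map \<psi> (shifted_copies K x ys)) = sum_list (map \<psi> ys) * (\<Sum>k<K. \<psi> x ^ k)"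
proof (induction K)
  case (Suc K)
  have shift: "sum_list (map \<psi> (map ((+) x) zs)) = \<psi> x * sum_list (map \<psi> zs)" for zs
    using assms by (simp add: unimodular_hom_def comp_def sum_list_const_mult)
  have geometric: "(\<Sum>k<Suc K. \<psi> x ^ k) = 1 + \<psi> x * (\<Sum>k<K. \<psi> x ^ k)"
    by (simp only: sum.lessThan_Suc_shift) (simp add: sum_distrib_left)
  show ?case
    unfolding shifted_copies.simps map_append sum_list_append shift Suc geometric
    by (simp add: algebra_simps)
qed simp

lemma norm_sum_list_shifted_copies_le:
  fixes a c :: real
  assumes hom: "unimodular_hom \<psi>" and "norm (sum_list (map \<psi> ys)) \<le> a * length ys"
    and "norm (\<Sum>k<K. \<psi> x ^ k) \<le> c * K"
  shows "norm (sum_list (map \<psi> (shifted_copies K x ys))) \<le> a * c * length (shifted_copies K x ys)"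
proof -
  have "0 \<le> a * length ys"
    using norm_ge_zero assms(2) by (rule order_trans)
  have "norm (sum_list (map \<psi> (shifted_copies K x ys))) =
      norm (sum_list (map \<psi> ys)) * norm (\<Sum>k<K. \<psi> x ^ k)"
    by (simp add: sum_list_shifted_copies[OF hom] norm_mult)
  also have "\<dots> \<le> (a * length ys) * (c * K)"
    using assms(2,3) \<open>0 \<le> a * length ys\<close> by (intro mult_mono) auto
  finally show ?thesis
    by (simp add: length_shifted_copies algebra_simps)
qed

lemma exists_small_geometric_average:
  fixes \<zeta> :: complex and \<epsilon> :: real
  assumes "norm \<zeta> = 1" "\<zeta> \<noteq> 1" "\<epsilon> > 0"
  shows "\<exists>K>0. norm (\<Sum>k<K. \<zeta> ^ k) \<le> \<epsilon> * K"
proof -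
  define K where "K = nat \<lceil>2 / (\<epsilon> * norm (1 - \<zeta>))\<rceil> + 1"
  have "2 / (\<epsilon> * norm (1 - \<zeta>)) \<le> K"
    unfolding K_def by linarith
  then have "2 / norm (1 - \<zeta>) \<le> \<epsilon> * K"
    using assms by (simp add: field_simps)
  moreover have "norm (1 - \<zeta> ^ K) \<le> 2"
    using norm_triangle_ineq4[of 1 "\<zeta> ^ K"] assms by (simp add: norm_power)
  then have "norm (\<Sum>k<K. \<zeta> ^ k) \<le> 2 / norm (1 - \<zeta>)"
    using assms by (simp add: sum_gp_strict norm_divide divide_right_mono)
  ultimately show ?thesis
    by (intro exI[of _ K]) (simp add: K_def)
qed

(* Replacing ys by its translates by 0, x, ..., (K-1) x multiplies the sum of every \<psi> by the
   geometric sum of \<psi> x: small on average for the new character \<kappa> (with \<kappa> x \<noteq> 1), and of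
   modulus at most K for the others. *)
lemma exists_list_small_averages:
  fixes C :: "('g::ab_group_add \<Rightarrow> complex) set" and \<epsilon> :: real
  assumes "finite C" "\<And>\<kappa>. \<kappa> \<in> C \<Longrightarrow> unimodular_hom \<kappa>" "\<epsilon> > 0"
  shows "\<exists>ys. ys \<noteq> [] \<and>
           (\<forall>\<kappa>\<in>C. (\<exists>x. \<kappa> x \<noteq> 1) \<longrightarrow> norm (sum_list (map \<kappa> ys)) \<le> \<epsilon> * length ys)"
  using assms
proof (induction C rule: finite_induct)
  case empty
  show ?case by (intro exI[of _ "[0]"]) auto
next
  case (insert \<kappa> C)
  then obtain ys where ys: "ys \<noteq> []"
    and small: "\<And>\<psi>. \<psi> \<in> C \<Longrightarrow> \<exists>x. \<psi> x \<noteq> 1 \<Longrightarrow> norm (sum_list (map \<psi> ys)) \<le> \<epsilon> * length ys"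
    by auto
  show ?case
  proof (cases "\<exists>x. \<kappa> x \<noteq> 1")
    case False
    then show ?thesis using ys small by auto
  next
    case True
    then obtain x where x: "\<kappa> x \<noteq> 1" by auto
    have norm_x: "norm (\<psi> x) = 1" if "\<psi> \<in> insert \<kappa> C" for \<psi>
      using insert.prems(1)[OF that] by (simp add: unimodular_hom_def)
    obtain K where "K > 0" and K: "norm (\<Sum>k<K. \<kappa> x ^ k) \<le> \<epsilon> * K"
      using exists_small_geometric_average[OF norm_x[OF insertI1] x \<open>\<epsilon> > 0\<close>] by auto
    define ys' where "ys' = shifted_copies K x ys"
    show ?thesis
    proof (intro exI[of _ ys'] conjI ballI impI)
      have "length ys' > 0"
        using ys \<open>K > 0\<close> by (simp add: ys'_def length_shifted_copies)
      then show "ys' \<noteq> []" by auto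
    next
      fix \<psi> assume \<psi>: "\<psi> \<in> insert \<kappa> C" "\<exists>y. \<psi> y \<noteq> 1"
      have hom: "unimodular_hom \<psi>" using insert.prems(1)[OF \<psi>(1)] .
      show "norm (sum_list (map \<psi> ys')) \<le> \<epsilon> * length ys'"
      proof (cases "\<psi> = \<kappa>")
        case True
        then show ?thesis
          using norm_sum_list_shifted_copies_le[OF hom, where a = 1 and c = \<epsilon>]
            norm_sum_list_unimodular_hom_le[OF hom] K
          by (simp add: ys'_def)
      next
        case False
        have "norm (\<Sum>k<K. \<psi> x ^ k) \<le> (\<Sum>k<K. norm (\<psi> x ^ k))"
          by (rule norm_sum)
        then have "norm (\<Sum>k<K. \<psi> x ^ k) \<le> 1 * K"
          using norm_x[OF \<psi>(1)] by (simp add: norm_power)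
        then show ?thesis
          using norm_sum_list_shifted_copies_le[OF hom, where a = \<epsilon> and c = 1] small[of \<psi>] False \<psi>
          by (simp add: ys'_def)
      qed
    qed
  qed
qed

lemma Re_sum_list: "Re (sum_list xs) = sum_list (map Re xs)"
  by (induction xs) auto

lemma sum_list_map_sum: "sum_list (map (\<lambda>y. \<Sum>p\<in>S. g p y) ys) = (\<Sum>p\<in>S. sum_list (map (g p) ys))"
  by (induction ys) (simp_all add: sum.distrib)

(* The averages over the lists of exists_list_small_averages stand in for the Haar integral,
   under which a trigonometric polynomial has mean equal to its coefficient sum over the trivial
   characters. *)
lemma Re_sum_trivial_le_sup:
  fixes f :: "'p \<Rightarrow> 'g::ab_group_add \<Rightarrow> complex" and c :: "'p \<Rightarrow> complex" and B :: real
  assumes S: "finite S" and hom: "\<And>p. p \<in> S \<Longrightarrow> unimodular_hom (f p)"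
    and bound: "\<And>x. Re (\<Sum>p\<in>S. c p * f p x) \<le> B"
  shows "Re (\<Sum>p | p \<in> S \<and> (\<forall>x. f p x = 1). c p) \<le> B"
proof (rule field_le_epsilon)
  fix e :: real
  assume "e > 0"
  define T where "T = {p \<in> S. \<forall>x. f p x = 1}"
  define total where "total = (\<Sum>p\<in>S. norm (c p))"
  have "total \<ge> 0" by (simp add: total_def sum_nonneg)
  define \<epsilon> where "\<epsilon> = e / (1 + total)"
  have "\<epsilon> > 0"
    using \<open>e > 0\<close> \<open>total \<ge> 0\<close> by (simp add: \<epsilon>_def)
  have "total * \<epsilon> \<le> e"
    using \<open>e > 0\<close> \<open>total \<ge> 0\<close> by (simp add: \<epsilon>_def field_simps)
  have "\<exists>ys. ys \<noteq> [] \<and>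
      (\<forall>\<kappa>\<in>f ` S. (\<exists>x. \<kappa> x \<noteq> 1) \<longrightarrow> norm (sum_list (map \<kappa> ys)) \<le> \<epsilon> * length ys)"
    using S hom \<open>\<epsilon> > 0\<close> by (intro exists_list_small_averages) auto
  then obtain ys where ys: "ys \<noteq> []"
    and small: "\<And>p. p \<in> S \<Longrightarrow> \<exists>x. f p x \<noteq> 1 \<Longrightarrow> norm (sum_list (map (f p) ys)) \<le> \<epsilon> * length ys"
    by auto
  define R where "R = real (length ys)"
  have "R > 0" using ys by (simp add: R_def)
  define Y where "Y p = sum_list (map (f p) ys)" for p
  have "(\<Sum>p\<in>S. c p * Y p) = sum_list (map (\<lambda>y. \<Sum>p\<in>S. c p * f p y) ys)"
    by (simp only: Y_def sum_list_map_sum sum_list_const_mult)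
  then have "Re (\<Sum>p\<in>S. c p * Y p) = sum_list (map (\<lambda>y. Re (\<Sum>p\<in>S. c p * f p y)) ys)"
    by (simp only: Re_sum_list map_map comp_def)
  also have "\<dots> \<le> R * B"
    using sum_list_mono[of ys _ "\<lambda>_. B"] bound by (simp add: R_def sum_list_triv)
  finally have mean: "Re (\<Sum>p\<in>S. c p * Y p) \<le> R * B" .
  have "(\<Sum>p\<in>S. c p * Y p) = (\<Sum>p\<in>T. c p * Y p) + (\<Sum>p\<in>S - T. c p * Y p)"
    using S by (simp add: T_def sum.subset_diff[of T S])
  moreover have "(\<Sum>p\<in>T. c p * Y p) = R * (\<Sum>p\<in>T. c p)"
  proof -
    have "Y p = R" if "p \<in> T" for p
    proof -
      have "f p = (\<lambda>_. 1)" using that by (auto simp: T_def)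
      then show ?thesis by (simp add: Y_def R_def sum_list_triv)
    qed
    then show ?thesis by (simp add: sum_distrib_left mult.commute)
  qed
  moreover have "norm (\<Sum>p\<in>S - T. c p * Y p) \<le> R * e"
  proof -
    have "norm (\<Sum>p\<in>S - T. c p * Y p) \<le> (\<Sum>p\<in>S - T. norm (c p) * (\<epsilon> * R))"
      using small by (intro order_trans[OF norm_sum] sum_mono)
        (auto simp: T_def Y_def R_def norm_mult intro!: mult_left_mono)
    also have "\<dots> \<le> total * (\<epsilon> * R)"
      using S \<open>\<epsilon> > 0\<close> \<open>R > 0\<close> by (simp add: total_def sum_distrib_right[symmetric] sum_mono2)
    also have "\<dots> \<le> e * R"
      using \<open>total * \<epsilon> \<le> e\<close> \<open>R > 0\<close> by (simp add: mult.assoc[symmetric])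
    finally show ?thesis by (simp add: mult.commute)
  qed
  ultimately have "R * Re (\<Sum>p\<in>T. c p) \<le> R * B + R * e"
    using mean abs_Re_le_cmod[of "\<Sum>p\<in>S - T. c p * Y p"] by simp
  then show "Re (\<Sum>p | p \<in> S \<and> (\<forall>x. f p x = 1). c p) \<le> B + e"
    using \<open>R > 0\<close> by (simp add: T_def distrib_left[symmetric])
qed

lemma card_squared_le_card_pairs_same_image:
  assumes A: "finite A" and B: "finite B" and f: "f ` A \<subseteq> B"
  shows "real (card A) ^ 2 \<le> real (card {p \<in> A \<times> A. f (fst p) = f (snd p)}) * real (card B)"
proof -
  define c where "c b = card {a \<in> A. f a = b}" for b
  have pairs: "card {p \<in> A \<times> A. f (fst p) = f (snd p)} = (\<Sum>b\<in>f ` A. c b * c b)"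
  proof -
    have "card {p \<in> A \<times> A. f (fst p) = f (snd p)} =
        (\<Sum>p\<in>A \<times> A. if f (fst p) = f (snd p) then 1 else 0)"
      using A by (simp add: sum.If_cases Int_def)
    also have "\<dots> = (\<Sum>a\<in>A. \<Sum>a'\<in>A. if f a = f a' then 1 else 0)"
      by (simp add: sum.cartesian_product case_prod_beta)
    also have "\<dots> = (\<Sum>a\<in>A. c (f a))"
      using A by (simp add: sum.If_cases Int_def c_def eq_commute conj_commute)
    also have "\<dots> = (\<Sum>b\<in>f ` A. \<Sum>a | a \<in> A \<and> f a = b. c (f a))"
      using A by (rule sum.image_gen)
    finally show ?thesis by (simp add: c_def)
  qed
  have "card A = (\<Sum>b\<in>f ` A. c b)"
    using sum.image_gen[OF A, of "\<lambda>_. 1::nat" f] by (simp add: c_def)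
  then have "real (card A) ^ 2 = (\<Sum>b\<in>f ` A. real (c b)) ^ 2" by simp
  also have "\<dots> \<le> (\<Sum>b\<in>f ` A. real (c b) ^ 2) * card (f ` A)"
    by (rule sum_squared_le_sum_of_squares)
  also have "\<dots> \<le> (\<Sum>b\<in>f ` A. real (c b) ^ 2) * card B"
    using card_mono[OF B f] by (intro mult_left_mono) (auto intro: sum_nonneg)
  finally show ?thesis by (simp add: pairs power2_eq_square)
qed

definition occurrences :: "nat \<Rightarrow> (nat \<Rightarrow> nat) \<Rightarrow> nat \<Rightarrow> nat" where
  "occurrences M s j = card {k \<in> {..<M}. s k = j}"

lemma power_sum_eq_sum_PiE_occurrences:
  fixes u :: "nat \<Rightarrow> 'a::comm_semiring_1"
  shows "(\<Sum>j<m. u j) ^ M = (\<Sum>s\<in>PiE {..<M} (\<lambda>_. {..<m}). \<Prod>j<m. u j ^ occurrences M s j)"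
proof -
  have "(\<Sum>j<m. u j) ^ M = (\<Sum>s\<in>PiE {..<M} (\<lambda>_. {..<m}). \<Prod>k<M. u (s k))"
    using prod_sum_PiE[of "{..<M}" "\<lambda>_. {..<m}" "\<lambda>_. u"] by simp
  also have "\<dots> = (\<Sum>s\<in>PiE {..<M} (\<lambda>_. {..<m}). \<Prod>j<m. u j ^ occurrences M s j)"
  proof (rule sum.cong[OF refl])
    fix s assume s: "s \<in> PiE {..<M} (\<lambda>_. {..<m})"
    have "(\<Prod>k<M. u (s k)) = (\<Prod>k<M. \<Prod>j<m. if s k = j then u j else 1)"
      using s by (intro prod.cong refl) (auto simp: prod.delta)
    also have "\<dots> = (\<Prod>j<m. \<Prod>k<M. if s k = j then u j else 1)"
      by (rule prod.swap)
    also have "\<dots> = (\<Prod>j<m. u j ^ occurrences M s j)"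
      by (simp add: prod.If_cases Int_def occurrences_def)
    finally show "(\<Prod>k<M. u (s k)) = (\<Prod>j<m. u j ^ occurrences M s j)" .
  qed
  finally show ?thesis .
qed

definition laurent_monomial :: "nat \<Rightarrow> (nat \<Rightarrow> complex) \<Rightarrow> (nat \<Rightarrow> int) \<Rightarrow> complex" where
  "laurent_monomial n z e = (\<Prod>i<n. z i powi e i)"

lemma unimodular_cnj_eq_inverse:
  fixes z :: complex
  assumes "norm z = 1"
  shows "cnj z = inverse z"
  using assms complex_div_cnj[of 1 z] by (simp add: divide_inverse)

lemma unimodular_power_mult_cnj_power:
  fixes g t :: complex
  assumes "norm g = 1" "norm t = 1"
  shows "(g * cnj t) ^ a * cnj (g * cnj t) ^ b = g powi (int a - int b) * cnj (t powi (int a - int b))"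
proof -
  define z where "z = g * cnj t"
  have "norm z = 1" using assms by (simp add: z_def norm_mult)
  then have "z \<noteq> 0" by auto
  have "z ^ a * cnj z ^ b = z powi (int a - int b)"
    using \<open>z \<noteq> 0\<close> unimodular_cnj_eq_inverse[OF \<open>norm z = 1\<close>]
    by (simp add: power_int_diff divide_inverse power_inverse)
  also have "\<dots> = g powi (int a - int b) * cnj t powi (int a - int b)"
    by (simp add: z_def power_int_mult_distrib)
  finally show ?thesis by (simp add: z_def)
qed
(* The sum of the n terms 1 + g i * cnj (t i) is read as a sum of 2n terms, the last n of them
   equal to 1, so that its M-th power expands over maps {..<M} \<rightarrow> {..<2n}. *)
lemma norm_power_sum_one_plus_eq_sum_laurent_monomials:
  fixes g t :: "nat \<Rightarrow> complex" and M :: nat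
  assumes "\<And>i. i < n \<Longrightarrow> norm (g i) = 1" "\<And>i. i < n \<Longrightarrow> norm (t i) = 1"
  defines "A \<equiv> PiE {..<M} (\<lambda>_. {..<2*n})"
    and "d \<equiv> \<lambda>s s' i. int (occurrences M s i) - int (occurrences M s' i)"
  shows "complex_of_real (norm (\<Sum>i<n. 1 + g i * cnj (t i)) ^ (2*M)) =
    (\<Sum>(s, s')\<in>A \<times> A. laurent_monomial n g (d s s') * cnj (laurent_monomial n t (d s s')))"
proof -
  define u where "u j = (if j < n then g j * cnj (t j) else 1)" for j
  define mon where "mon s = (\<Prod>i<n. (g i * cnj (t i)) ^ occurrences M s i)" for s
  have sum_u: "(\<Sum>i<n. 1 + g i * cnj (t i)) = (\<Sum>j<2*n. u j)"
  proof -
    have "(\<Sum>j<2*n. u j) = (\<Sum>j<n. u j) + (\<Sum>j\<in>{n..<2*n}. u j)"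
      by (subst sum.union_disjoint[symmetric]) (auto intro: sum.cong)
    then show ?thesis by (simp add: u_def sum.distrib)
  qed
  have expansion: "(\<Sum>i<n. 1 + g i * cnj (t i)) ^ M = (\<Sum>s\<in>A. mon s)"
  proof -
    have "(\<Prod>j<2*n. u j ^ occurrences M s j) = mon s" for s
    proof -
      have "(\<Prod>j<2*n. u j ^ occurrences M s j) = (\<Prod>j<n. u j ^ occurrences M s j)"
        by (rule prod.mono_neutral_right) (auto simp: u_def)
      then show ?thesis by (simp add: mon_def u_def)
    qed
    then show ?thesis
      unfolding sum_u power_sum_eq_sum_PiE_occurrences A_def
      by simp
  qed
  have mon_mult_cnj: "mon s * cnj (mon s') = laurent_monomial n g (d s s') * cnj (laurent_monomial n t (d s s'))"
    for s s'
  proof -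
    have "mon s * cnj (mon s') =
        (\<Prod>i<n. (g i * cnj (t i)) ^ occurrences M s i * cnj (g i * cnj (t i)) ^ occurrences M s' i)"
      by (simp add: mon_def prod.distrib)
    also have "\<dots> = (\<Prod>i<n. g i powi d s s' i * cnj (t i powi d s s' i))"
    proof (rule prod.cong[OF refl])
      fix i assume "i \<in> {..<n}"
      then show "(g i * cnj (t i)) ^ occurrences M s i * cnj (g i * cnj (t i)) ^ occurrences M s' i =
          g i powi d s s' i * cnj (t i powi d s s' i)"
        unfolding d_def by (intro unimodular_power_mult_cnj_power assms(1,2)) auto
    qed
    finally show ?thesis
      by (simp add: laurent_monomial_def prod.distrib)
  qed
  have "norm (\<Sum>i<n. 1 + g i * cnj (t i)) ^ (2*M) = norm ((\<Sum>i<n. 1 + g i * cnj (t i)) ^ M) ^ 2"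
    by (simp add: norm_power mult.commute power_mult)
  then have "complex_of_real (norm (\<Sum>i<n. 1 + g i * cnj (t i)) ^ (2*M)) =
      (\<Sum>s\<in>A. mon s) * cnj (\<Sum>s\<in>A. mon s)"
    by (simp only: complex_norm_square expansion)
  also have "\<dots> = (\<Sum>(s, s')\<in>A \<times> A. mon s * cnj (mon s'))"
    by (simp add: sum_product sum.cartesian_product)
  also have "\<dots> = (\<Sum>(s, s')\<in>A \<times> A. laurent_monomial n g (d s s') * cnj (laurent_monomial n t (d s s')))"
    by (simp only: mon_mult_cnj)
  finally show ?thesis .
qed

lemma card_pairs_same_occurrences_ge:
  fixes m M n :: nat
  defines "A \<equiv> PiE {..<M} (\<lambda>_. {..<m})"
  shows "real m ^ (2*M) \<le>
    card {p \<in> A \<times> A. \<forall>i<n. occurrences M (fst p) i = occurrences M (snd p) i} * (1 + real M) ^ n"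
proof -
  define V where "V s = restrict (occurrences M s) {..<n}" for s
  define B where "B = PiE {..<n} (\<lambda>_. {..M})"
  have "finite A" by (simp add: A_def finite_PiE)
  have "V ` A \<subseteq> B"
  proof -
    have "occurrences M s i \<le> M" for s i
      using card_mono[of "{..<M}" "{k \<in> {..<M}. s k = i}"] by (auto simp: occurrences_def)
    then show ?thesis by (simp add: V_def B_def image_subset_iff restrict_PiE_iff)
  qed
  then have "real (card A) ^ 2 \<le> real (card {p \<in> A \<times> A. V (fst p) = V (snd p)}) * real (card B)"
    using \<open>finite A\<close> by (intro card_squared_le_card_pairs_same_image) (auto simp: B_def finite_PiE)
  also have "card {p \<in> A \<times> A. V (fst p) = V (snd p)} \<le>
      card {p \<in> A \<times> A. \<forall>i<n. occurrences M (fst p) i = occurrences M (snd p) i}"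
    using \<open>finite A\<close> by (intro card_mono) (auto simp: V_def restrict_def fun_eq_iff)
  then have "real (card {p \<in> A \<times> A. V (fst p) = V (snd p)}) * real (card B) \<le>
      card {p \<in> A \<times> A. \<forall>i<n. occurrences M (fst p) i = occurrences M (snd p) i} * real (card B)"
    by (intro mult_right_mono) auto
  also have "real (card B) = (1 + real M) ^ n" by (simp add: B_def card_PiE)
  also have "real (card A) ^ 2 = real m ^ (2*M)"
    by (simp add: A_def card_PiE power_mult[symmetric] mult.commute)
  finally show ?thesis .
qed

lemma power_lower_bound_if_respects_relations:
  fixes \<gamma> :: "nat \<Rightarrow> 'g::ab_group_add \<Rightarrow> complex" and t :: "nat \<Rightarrow> complex" and M :: nat
  assumes hom: "\<And>i. i < n \<Longrightarrow> unimodular_hom (\<gamma> i)"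
    and t: "\<And>i. i < n \<Longrightarrow> norm (t i) = 1"
    and rel: "\<And>e. (\<forall>x. laurent_monomial n (\<lambda>i. \<gamma> i x) e = 1) \<Longrightarrow> laurent_monomial n t e = 1"
    and bound: "\<And>x. norm (\<Sum>i<n. 1 + \<gamma> i x * cnj (t i)) \<le> b"
  shows "(2 * real n) ^ (2*M) \<le> b ^ (2*M) * (1 + real M) ^ n"
proof -
  define A where "A = PiE {..<M} (\<lambda>_. {..<2*n})"
  define d where "d p = (\<lambda>i. int (occurrences M (fst p) i) - int (occurrences M (snd p) i))" for p
  define chi where "chi p x = laurent_monomial n (\<lambda>i. \<gamma> i x) (d p)" for p x
  define T where "T = {p \<in> A \<times> A. \<forall>x. chi p x = 1}"
  have "finite A" by (simp add: A_def finite_PiE)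
  have "Re (\<Sum>p\<in>T. cnj (laurent_monomial n t (d p))) \<le> b ^ (2*M)"
    unfolding T_def
  proof (rule Re_sum_trivial_le_sup)
    show "finite (A \<times> A)" using \<open>finite A\<close> by simp
  next
    fix p
    show "unimodular_hom (chi p)"
      unfolding chi_def laurent_monomial_def using hom by (intro unimodular_hom_prod_powi) auto
  next
    fix x
    have "(\<Sum>p\<in>A \<times> A. cnj (laurent_monomial n t (d p)) * chi p x) =
        complex_of_real (norm (\<Sum>i<n. 1 + \<gamma> i x * cnj (t i)) ^ (2*M))"
      using norm_power_sum_one_plus_eq_sum_laurent_monomials[of n "\<lambda>i. \<gamma> i x" t M] hom t
      by (simp add: A_def d_def chi_def case_prod_beta mult.commute unimodular_hom_def)
    then show "Re (\<Sum>p\<in>A \<times> A. cnj (laurent_monomial n t (d p)) * chi p x) \<le> b ^ (2*M)"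
      using bound[of x] by (simp add: power_mono)
  qed
  moreover have "cnj (laurent_monomial n t (d p)) = 1" if "p \<in> T" for p
    using rel[of "d p"] that by (simp add: T_def chi_def)
  ultimately have "card T \<le> b ^ (2*M)" by simp
  moreover have "card {p \<in> A \<times> A. \<forall>i<n. occurrences M (fst p) i = occurrences M (snd p) i} \<le> card T"
    using \<open>finite A\<close> unfolding T_def
    by (intro card_mono) (auto simp: chi_def d_def laurent_monomial_def intro!: prod.neutral)
  ultimately have "card {p \<in> A \<times> A. \<forall>i<n. occurrences M (fst p) i = occurrences M (snd p) i}
      \<le> b ^ (2*M)"
    by linarith
  then have "card {p \<in> A \<times> A. \<forall>i<n. occurrences M (fst p) i = occurrences M (snd p) i} * (1 + real M) ^ n
      \<le> b ^ (2*M) * (1 + real M) ^ n"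
    by (intro mult_right_mono) auto
  moreover have "(2 * real n) ^ (2*M) \<le>
      card {p \<in> A \<times> A. \<forall>i<n. occurrences M (fst p) i = occurrences M (snd p) i} * (1 + real M) ^ n"
    using card_pairs_same_occurrences_ge[of "2 * n" M n] unfolding A_def by simp
  ultimately show ?thesis by linarith
qed

lemma norm_one_plus_unimodular_le:
  fixes w :: complex
  assumes "norm w = 1"
  shows "norm (1 + w) \<le> 2 - norm (1 - w) ^ 2 / 4"
proof -
  have parallelogram: "norm (1 + w) ^ 2 + norm (1 - w) ^ 2 = 4"
  proof -
    have "Re w ^ 2 + Im w ^ 2 = 1" using assms cmod_power2[of w] by simp
    then show ?thesis unfolding cmod_power2 by (simp add: power2_eq_square algebra_simps)
  qed
  define u where "u = norm (1 - w) ^ 2"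
  have "0 \<le> norm (1 + w) ^ 2" "0 \<le> u" by (simp_all add: u_def)
  then have "u \<le> 4" "norm (1 + w) ^ 2 = 4 - u"
    using parallelogram unfolding u_def by linarith+
  moreover have "(2 - u / 4) ^ 2 = 4 - u + u ^ 2 / 16" by (simp add: power2_eq_square algebra_simps)
  moreover have "0 \<le> u ^ 2 / 16" by simp
  ultimately have "norm (1 + w) ^ 2 \<le> (2 - u / 4) ^ 2" "0 \<le> 2 - u / 4" by linarith+
  then have "norm (1 + w) \<le> 2 - u / 4" by (rule power2_le_imp_le)
  then show ?thesis unfolding u_def .
qed

lemma polynomial_times_geometric_tendsto_0:
  fixes q :: real
  assumes "0 \<le> q" "q < 1"
  shows "(\<lambda>M. (1 + real M) ^ n * q ^ M) \<longlonglongrightarrow> 0"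
proof -
  define c where "c = (1 + q) / 2"
  have "c < 1" "q < c" using assms by (auto simp: c_def)
  have "(\<lambda>M. (1 + inverse (real (Suc M))) ^ n * q) \<longlonglongrightarrow> (1 + 0) ^ n * q"
    by (intro tendsto_intros LIMSEQ_inverse_real_of_nat)
  then have "eventually (\<lambda>M. (1 + inverse (real (Suc M))) ^ n * q < c) sequentially"
    using \<open>q < c\<close> by (intro order_tendstoD) auto
  then obtain M\<^sub>0 where ratio: "\<And>M. M \<ge> M\<^sub>0 \<Longrightarrow> (1 + inverse (real (Suc M))) ^ n * q < c"
    by (auto simp: eventually_sequentially)
  have "summable (\<lambda>M. (1 + real M) ^ n * q ^ M)"
  proof (rule summable_ratio_test[OF \<open>c < 1\<close>])
    fix M assume "M \<ge> M\<^sub>0"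
    have "1 + real (Suc M) = (1 + inverse (real (Suc M))) * (1 + real M)"
      by (simp add: field_simps)
    then have "(1 + real (Suc M)) ^ n = (1 + inverse (real (Suc M))) ^ n * (1 + real M) ^ n"
      by (simp only: power_mult_distrib)
    then have "norm ((1 + real (Suc M)) ^ n * q ^ Suc M) =
        ((1 + inverse (real (Suc M))) ^ n * q) * ((1 + real M) ^ n * q ^ M)"
      using assms by simp
    also have "\<dots> \<le> c * ((1 + real M) ^ n * q ^ M)"
      using ratio[OF \<open>M \<ge> M\<^sub>0\<close>] assms by (intro mult_right_mono) auto
    finally show "norm ((1 + real (Suc M)) ^ n * q ^ Suc M) \<le> c * norm ((1 + real M) ^ n * q ^ M)"
      using assms by simp
  qed
  then show ?thesis by (rule summable_LIMSEQ_zero)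
qed

lemma norm_sum_one_plus_mult_cnj_le:
  fixes g t :: "nat \<Rightarrow> complex"
  assumes g: "\<And>i. i < n \<Longrightarrow> norm (g i) = 1" and t: "\<And>i. i < n \<Longrightarrow> norm (t i) = 1"
  shows "norm (\<Sum>i<n. 1 + g i * cnj (t i)) \<le> 2 * real n - (\<Sum>i<n. norm (t i - g i) ^ 2) / 4"
proof -
  have "norm (1 + g i * cnj (t i)) \<le> 2 - norm (t i - g i) ^ 2 / 4" if "i < n" for i
  proof -
    have "t i - g i = t i * (1 - g i * cnj (t i))"
      using t[OF that] complex_norm_square[of "t i"] by (simp add: algebra_simps)
    then show ?thesis
      using norm_one_plus_unimodular_le[of "g i * cnj (t i)"] g[OF that] t[OF that]
      by (simp add: norm_mult)
  qed
  then have "norm (\<Sum>i<n. 1 + g i * cnj (t i)) \<le> (\<Sum>i<n. 2 - norm (t i - g i) ^ 2 / 4)"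
    by (intro order_trans[OF norm_sum] sum_mono) auto
  also have "\<dots> = 2 * real n - (\<Sum>i<n. norm (t i - g i) ^ 2) / 4"
    by (simp add: sum_subtractf sum_divide_distrib)
  finally show ?thesis .
qed

lemma le_if_power_le_power_times_polynomial:
  fixes a b :: real
  assumes "0 \<le> b" "0 < a" and power_le: "\<And>M. a ^ (2*M) \<le> b ^ (2*M) * (1 + real M) ^ n"
  shows "a \<le> b"
proof (rule ccontr)
  assume "\<not> a \<le> b"
  define q where "q = (b / a) ^ 2"
  have "0 \<le> q" "q < 1"
    using assms \<open>\<not> a \<le> b\<close> by (simp_all add: q_def abs_square_less_1)
  then have "eventually (\<lambda>M. (1 + real M) ^ n * q ^ M < 1/2) sequentially"
    using polynomial_times_geometric_tendsto_0 by (intro order_tendstoD) auto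
  then obtain M where M: "(1 + real M) ^ n * q ^ M < 1/2"
    by (auto simp: eventually_sequentially)
  have "b ^ (2*M) = a ^ (2*M) * q ^ M"
    using \<open>0 < a\<close> by (simp add: q_def power_mult power_divide)
  with power_le[of M] have "a ^ (2*M) \<le> a ^ (2*M) * ((1 + real M) ^ n * q ^ M)"
    by (simp add: algebra_simps)
  with M \<open>0 < a\<close> show False by simp
qed

lemma exists_point_if_respects_relations:
  fixes \<gamma> :: "nat \<Rightarrow> 'g::topological_ab_group_add \<Rightarrow> complex" and t :: "nat \<Rightarrow> complex"
  assumes compact: "compact (UNIV :: 'g set)"
    and character: "\<And>i. i < n \<Longrightarrow> character (\<gamma> i)"
    and t: "\<And>i. i < n \<Longrightarrow> norm (t i) = 1"
    and rel: "\<And>e. (\<forall>x. laurent_monomial n (\<lambda>i. \<gamma> i x) e = 1) \<Longrightarrow> laurent_monomial n t e = 1"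
  shows "\<exists>x. \<forall>i<n. \<gamma> i x = t i"
proof (rule ccontr)
  assume no_solution: "\<nexists>x. \<forall>i<n. \<gamma> i x = t i"
  then have "n > 0" by auto
  have hom: "unimodular_hom (\<gamma> i)" if "i < n" for i
    using character[OF that] by (rule character_imp_unimodular_hom)
  define D where "D x = (\<Sum>i<n. norm (t i - \<gamma> i x) ^ 2)" for x
  have "continuous_on UNIV D"
    using character unfolding D_def character_def by (intro continuous_intros) auto
  then obtain x\<^sub>0 where min: "\<And>x. D x\<^sub>0 \<le> D x"
    using continuous_attains_inf[OF compact] by auto
  have "D x\<^sub>0 > 0"
  proof -
    have "D x\<^sub>0 \<ge> 0" by (simp add: D_def sum_nonneg)
    moreover have "D x\<^sub>0 \<noteq> 0"
    proof
      assume "D x\<^sub>0 = 0"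
      then have "\<forall>i<n. \<gamma> i x\<^sub>0 = t i" by (simp add: D_def sum_nonneg_eq_0_iff)
      with no_solution show False by blast
    qed
    ultimately show ?thesis by simp
  qed
  define b where "b = 2 * real n - D x\<^sub>0 / 4"
  have "norm (\<gamma> i x) = 1" if "i < n" for i x
    using hom[OF that] by (simp add: unimodular_hom_def)
  then have bound: "norm (\<Sum>i<n. 1 + \<gamma> i x * cnj (t i)) \<le> b" for x
    using norm_sum_one_plus_mult_cnj_le[of n "\<lambda>i. \<gamma> i x" t] t min[of x]
    by (simp add: D_def b_def)
  have "0 \<le> b"
    using norm_ge_zero bound[of x\<^sub>0] by (rule order_trans)
  moreover have "0 < 2 * real n" using \<open>n > 0\<close> by simp
  moreover have "(2 * real n) ^ (2*M) \<le> b ^ (2*M) * (1 + real M) ^ n" for M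
    using hom t rel bound by (rule power_lower_bound_if_respects_relations)
  ultimately have "2 * real n \<le> b"
    by (rule le_if_power_le_power_times_polynomial)
  with \<open>D x\<^sub>0 > 0\<close> show False by (simp add: b_def)
qed

lemma root_of_unity_powi_eq_1:
  fixes z :: complex
  assumes "z ^ N = 1" "int N dvd k"
  shows "z powi k = 1"
proof -
  obtain j where "k = int N * j" using assms(2) by (elim dvdE)
  then show ?thesis using assms(1) by (simp add: power_int_mult)
qed

lemma cis_2pi_div_power:
  assumes "N \<ge> 1"
  shows "cis (2 * pi / N) ^ N = 1"
proof -
  have "cis (2 * pi / N) ^ N = cis (real N * (2 * pi / N))" by (rule Complex.DeMoivre)
  also have "real N * (2 * pi / real N) = 2 * pi" using assms by simp
  finally show ?thesis by simp
qed

lemma cis_2pi_div_powi_eq_1_imp_dvd: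
  assumes "N \<ge> 1" "cis (2 * pi / N) powi k = 1"
  shows "int N dvd k"
proof -
  have "cos (of_int k * (2 * pi / N)) = 1"
    using assms(2) by (simp add: cis_power_int complex_eq_iff)
  then obtain j :: int where "of_int k * (2 * pi / N) = of_int j * 2 * pi"
    by (auto simp: cos_one_2pi_int)
  then have "real_of_int k = of_int j * of_nat N"
    using assms(1) by (simp add: field_simps)
  then have "k = j * int N" by (metis of_int_eq_iff of_int_mult of_int_of_nat_eq)
  then show ?thesis by simp
qed

lemma N_PR_imp_dvd_exponents:
  fixes E :: "('g::topological_ab_group_add \<Rightarrow> complex) set"
    and \<gamma> :: "nat \<Rightarrow> 'g \<Rightarrow> complex" and m :: "nat \<Rightarrow> int"
  assumes PR: "N_PR N E" and "N \<ge> 1"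
    and inj: "inj_on \<gamma> {..<n}" and sub: "\<gamma> ` {..<n} \<subseteq> E"
    and relation: "\<forall>x. (\<Prod>i<n. \<gamma> i x powi m i) = 1" and "j < n"
  shows "int N dvd m j"
proof -
  define \<omega> where "\<omega> = cis (2 * pi / N)"
  define \<phi> where "\<phi> g = (if g = \<gamma> j then \<omega> else 1)" for g :: "'g \<Rightarrow> complex"
  have "\<forall>g\<in>E. \<phi> g \<in> roots_of_unity N"
    using cis_2pi_div_power[OF \<open>N \<ge> 1\<close>] by (simp add: \<phi>_def \<omega>_def roots_of_unity_def)
  then obtain x where x: "\<forall>g\<in>E. \<phi> g = g x"
    using PR[unfolded N_PR_def, rule_format, of \<phi>] by blast
  have factor: "\<gamma> i x powi m i = (if i = j then \<omega> powi m j else 1)" if "i < n" for i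
  proof -
    have "\<gamma> i = \<gamma> j \<longleftrightarrow> i = j"
      using inj_onD[OF inj, of i j] that \<open>j < n\<close> by auto
    moreover have "\<gamma> i \<in> E" using sub that by auto
    ultimately have "\<gamma> i x = (if i = j then \<omega> else 1)"
      using x unfolding \<phi>_def by metis
    then show ?thesis by simp
  qed
  have "(\<Prod>i<n. \<gamma> i x powi m i) = (\<Prod>i<n. if i = j then \<omega> powi m j else 1)"
    using factor by (intro prod.cong) auto
  also have "\<dots> = \<omega> powi m j"
    using \<open>j < n\<close> by (subst prod.delta) auto
  finally have "(\<Prod>i<n. \<gamma> i x powi m i) = \<omega> powi m j" .
  then show ?thesis
    using relation cis_2pi_div_powi_eq_1_imp_dvd[OF \<open>N \<ge> 1\<close>] by (simp add: \<omega>_def)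
qed

lemma dvd_exponents_imp_N_PR:
  fixes E :: "('g::topological_ab_group_add \<Rightarrow> complex) set"
  assumes compact: "compact (UNIV :: 'g set)" and "N \<ge> 1" and "E \<subseteq> dual_group"
    and dvd: "\<And>(n::nat) (\<gamma>::nat \<Rightarrow> 'g \<Rightarrow> complex) (m::nat \<Rightarrow> int). inj_on \<gamma> {..<n} \<Longrightarrow> \<gamma> ` {..<n} \<subseteq> E \<Longrightarrow>
      \<forall>x. (\<Prod>i<n. \<gamma> i x powi m i) = 1 \<Longrightarrow> \<forall>i<n. int N dvd m i"
  shows "N_PR N E"
  unfolding N_PR_def
proof (intro allI impI)
  fix \<phi> :: "('g \<Rightarrow> complex) \<Rightarrow> complex"
  assume \<phi>: "\<forall>\<gamma>\<in>E. \<phi> \<gamma> \<in> roots_of_unity N"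
  have "UNIV \<inter> (\<Inter>g\<in>E. {x. g x = \<phi> g}) \<noteq> {}"
  proof (rule compact_imp_fip_image[OF compact])
    fix g assume "g \<in> E"
    then have "continuous_on UNIV g"
      using \<open>E \<subseteq> dual_group\<close> by (auto simp: dual_group_def character_def)
    then show "closed {x. g x = \<phi> g}"
      by (intro closed_Collect_eq continuous_on_const) auto
  next
    fix F assume "finite F" "F \<subseteq> E"
    then obtain n :: nat and \<gamma> where F: "F = \<gamma> ` {..<n}" and inj: "inj_on \<gamma> {..<n}"
      using finite_imp_nat_seg_image_inj_on[OF \<open>finite F\<close>] unfolding lessThan_def by blast
    have \<gamma>E: "\<gamma> i \<in> E" if "i < n" for i using F \<open>F \<subseteq> E\<close> that by auto
    have "\<exists>x. \<forall>i<n. \<gamma> i x = \<phi> (\<gamma> i)"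
    proof (rule exists_point_if_respects_relations[OF compact])
      fix i assume "i < n"
      then have "\<gamma> i \<in> E" "\<phi> (\<gamma> i) ^ N = 1"
        using \<gamma>E \<phi> by (auto simp: roots_of_unity_def)
      then show "character (\<gamma> i)" "norm (\<phi> (\<gamma> i)) = 1"
        using \<open>E \<subseteq> dual_group\<close> power_eq_1_iff \<open>N \<ge> 1\<close> by (auto simp: dual_group_def)
    next
      fix e assume "\<forall>x. laurent_monomial n (\<lambda>i. \<gamma> i x) e = 1"
      then have "\<forall>i<n. int N dvd e i"
        using dvd[OF inj] F \<open>F \<subseteq> E\<close> by (simp add: laurent_monomial_def)
      then show "laurent_monomial n (\<lambda>i. \<phi> (\<gamma> i)) e = 1"
        using \<gamma>E \<phi> unfolding laurent_monomial_def
        by (intro prod.neutral ballI root_of_unity_powi_eq_1) (auto simp: roots_of_unity_def)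
    qed
    then show "UNIV \<inter> (\<Inter>g\<in>F. {x. g x = \<phi> g}) \<noteq> {}"
      by (auto simp: F)
  qed
  then show "\<exists>x. \<forall>\<gamma>\<in>E. \<phi> \<gamma> = \<gamma> x" by auto
qed

theorem theorem2p4:
  fixes E :: "('g::{topological_ab_group_add, t2_space} \<Rightarrow> complex) set"
    and N :: nat
  assumes "compact (UNIV :: 'g set)"
    and "N \<ge> 1"
    and "E \<subseteq> dual_group"
  shows "N_PR N E \<longleftrightarrow>
    (\<forall>(n::nat) (\<gamma>::nat \<Rightarrow> ('g \<Rightarrow> complex)) (m::nat \<Rightarrow> int).
       inj_on \<gamma> {..<n} \<and> \<gamma> ` {..<n} \<subseteq> E \<and>
       (\<forall>x. (\<Prod>i<n. (\<gamma> i x) powi (m i)) = 1)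
       \<longrightarrow> (\<forall>i<n. int N dvd m i))"
  using N_PR_imp_dvd_exponents[OF _ assms(2)] dvd_exponents_imp_N_PR[OF assms] by blast

end
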